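(* For every $\epsilon>0$ there is an instance with uniform weights on which, setting $$A=\mathrm{opt}_M\text{-}\mathrm{MAX}=\mathrm{opt}_M\text{-}\mathrm{SUM}=\mathrm{opt}_D\text{-}\mathrm{WMP}=\mathrm{opt}_D\text{-}\mathrm{EMP}=\mathrm{opt}_D\text{-}\mathrm{MWP}$$ and $$B=\mathrm{opt}_D\text{-}\mathrm{WEP}=\mathrm{opt}_D\text{-}\mathrm{EEP}=\mathrm{opt}_D\text{-}\mathrm{MEP}=\mathrm{opt}\text{-}\mathrm{MAX}=\mathrm{opt}\text{-}\mathrm{SUM}$$ (all the displayed equalities holding), we have $A\ge(2-\epsilon)B$.
   Context: An instance consists of a finite set $E$ of $n$ elements and $m$ tests, test $i$ being a subset $s_i\subseteq E$; uniform weights mean $p_e=1/n$ for SUM objectives (EMP, MEP, EEP) and $p_e=1$ for MAX objectives (WMP, MWP, WEP). A schedule is an infinite test sequence; deterministic schedules are fixed sequences; stochastic schedules choose $\sigma_t$ randomly depending on the past; memoryless schedules draw each $\sigma_t$ i.i.d. from a distribution on tests. Detection time $T(e,t)=\mathbb{E}[1+\min\{h\ge0:e\in s_{\sigma_{t+h}}\}]$, $M_t[e]=\sup_tT(e,t)$, $E_t[e]=\lim_H\frac1H\sum_{t\le H}T(e,t)$; valid schedules have $M_t[e]<\infty$ and $E_t[e]$ existing for all $e$, and convergent test frequencies. $\mathrm{EMP}=\sum_ep_eM_t[e]$, $\mathrm{MEP}=\sup_t\sum_ep_eT(e,t)$, $\mathrm{EEP}=\sum_ep_eE_t[e]$, $\mathrm{WMP}=\sup_{e,t}p_eT(e,t)$,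 $\mathrm{WEP}=\max_ep_eE_t[e]$, $\mathrm{MWP}=\lim_H\frac1H\sum_{t\le H}\max_ep_eT(e,t)$. $\mathrm{opt}_D\text{-}X$: infimum of $X$ over valid deterministic schedules; $\mathrm{opt}\text{-}\mathrm{SUM}$, $\mathrm{opt}\text{-}\mathrm{MAX}$: infima of EEP, WEP over valid stochastic schedules; $\mathrm{opt}_M\text{-}\mathrm{SUM}$, $\mathrm{opt}_M\text{-}\mathrm{MAX}$: infima of EEP, WEP over memoryless schedules. *)

theory Defs
  imports "HOL-Probability.Probability"
begin

definition is_instance :: "nat \<Rightarrow> nat \<Rightarrow> (nat \<Rightarrow> nat set) \<Rightarrow> bool" where
  "is_instance n m s \<longleftrightarrow> n \<ge> 1 \<and> (\<forall>i<m. s i \<subseteq> {..<n}) \<and> (\<forall>e<n. \<exists>i<m. e \<in> s i)"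

text \<open>A test sequence is a function nat => nat (time t |-> index of test run at time t).
  hit s e sigma t = 1 + min{h >= 0. e in s (sigma (t+h))}, infinite if never.\<close>

definition hit :: "(nat \<Rightarrow> nat set) \<Rightarrow> nat \<Rightarrow> (nat \<Rightarrow> nat) \<Rightarrow> nat \<Rightarrow> ennreal" where
  "hit s e \<sigma> t = (if \<exists>h. e \<in> s (\<sigma> (t + h))
      then of_nat (1 + (LEAST h. e \<in> s (\<sigma> (t + h)))) else \<infinity>)"

definition seq_space :: "(nat \<Rightarrow> nat) measure" where
  "seq_space = PiM UNIV (\<lambda>_. count_space UNIV)"

definition det_sched :: "nat \<Rightarrow> (nat \<Rightarrow> nat) \<Rightarrow> bool" where
  "det_sched m \<sigma> \<longleftrightarrow> (\<forall>t. \<sigma> t < m)"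

text \<open>Stochastic schedules: arbitrary probability laws of the random test sequence
  (sigma_t may depend on the past in any way).\<close>
definition stoch_sched :: "nat \<Rightarrow> (nat \<Rightarrow> nat) measure \<Rightarrow> bool" where
  "stoch_sched m M \<longleftrightarrow> prob_space M \<and> sets M = sets seq_space \<and> (AE \<sigma> in M. \<forall>t. \<sigma> t < m)"

definition memoryless :: "nat pmf \<Rightarrow> (nat \<Rightarrow> nat) measure" where
  "memoryless q = PiM UNIV (\<lambda>_. measure_pmf q)"

definition test_dist :: "nat \<Rightarrow> nat pmf \<Rightarrow> bool" where
  "test_dist m q \<longleftrightarrow> set_pmf q \<subseteq> {..<m}"

definition T_det :: "(nat \<Rightarrow> nat set) \<Rightarrow> (nat \<Rightarrow> nat) \<Rightarrow> nat \<Rightarrow> nat \<Rightarrow> ennreal" where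
  "T_det s \<sigma> e t = hit s e \<sigma> t"

definition freq_det :: "(nat \<Rightarrow> nat) \<Rightarrow> nat \<Rightarrow> nat \<Rightarrow> ennreal" where
  "freq_det \<sigma> i t = (if \<sigma> t = i then 1 else 0)"

definition T_st :: "(nat \<Rightarrow> nat set) \<Rightarrow> (nat \<Rightarrow> nat) measure \<Rightarrow> nat \<Rightarrow> nat \<Rightarrow> ennreal" where
  "T_st s M e t = (\<integral>\<^sup>+ \<sigma>. hit s e \<sigma> t \<partial>M)"

definition freq_st :: "(nat \<Rightarrow> nat) measure \<Rightarrow> nat \<Rightarrow> nat \<Rightarrow> ennreal" where
  "freq_st M i t = emeasure M {\<sigma> \<in> space M. \<sigma> t = i}"

definition cesaro :: "(nat \<Rightarrow> ennreal) \<Rightarrow> nat \<Rightarrow> ennreal" where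
  "cesaro f H = (\<Sum>t<H. f t) / of_nat H"

definition Mt :: "(nat \<Rightarrow> nat \<Rightarrow> ennreal) \<Rightarrow> nat \<Rightarrow> ennreal" where
  "Mt T e = (SUP t. T e t)"

definition Et :: "(nat \<Rightarrow> nat \<Rightarrow> ennreal) \<Rightarrow> nat \<Rightarrow> ennreal" where
  "Et T e = lim (cesaro (\<lambda>t. T e t))"

definition valid :: "nat \<Rightarrow> nat \<Rightarrow> (nat \<Rightarrow> nat \<Rightarrow> ennreal) \<Rightarrow> (nat \<Rightarrow> nat \<Rightarrow> ennreal) \<Rightarrow> bool" where
  "valid n m T F \<longleftrightarrow> (\<forall>e<n. Mt T e < \<infinity>) \<and> (\<forall>e<n. convergent (cesaro (\<lambda>t. T e t)))
      \<and> (\<forall>i<m. convergent (cesaro (\<lambda>t. F i t)))"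

definition EMP :: "nat \<Rightarrow> (nat \<Rightarrow> ennreal) \<Rightarrow> (nat \<Rightarrow> nat \<Rightarrow> ennreal) \<Rightarrow> ennreal" where
  "EMP n p T = (\<Sum>e<n. p e * Mt T e)"

definition MEP :: "nat \<Rightarrow> (nat \<Rightarrow> ennreal) \<Rightarrow> (nat \<Rightarrow> nat \<Rightarrow> ennreal) \<Rightarrow> ennreal" where
  "MEP n p T = (SUP t. \<Sum>e<n. p e * T e t)"

definition EEP :: "nat \<Rightarrow> (nat \<Rightarrow> ennreal) \<Rightarrow> (nat \<Rightarrow> nat \<Rightarrow> ennreal) \<Rightarrow> ennreal" where
  "EEP n p T = (\<Sum>e<n. p e * Et T e)"

definition WMP :: "nat \<Rightarrow> (nat \<Rightarrow> ennreal) \<Rightarrow> (nat \<Rightarrow> nat \<Rightarrow> ennreal) \<Rightarrow> ennreal" where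
  "WMP n p T = (SUP e\<in>{..<n}. SUP t. p e * T e t)"

definition WEP :: "nat \<Rightarrow> (nat \<Rightarrow> ennreal) \<Rightarrow> (nat \<Rightarrow> nat \<Rightarrow> ennreal) \<Rightarrow> ennreal" where
  "WEP n p T = (SUP e\<in>{..<n}. p e * Et T e)"

definition MWP_avg :: "nat \<Rightarrow> (nat \<Rightarrow> ennreal) \<Rightarrow> (nat \<Rightarrow> nat \<Rightarrow> ennreal) \<Rightarrow> nat \<Rightarrow> ennreal" where
  "MWP_avg n p T = cesaro (\<lambda>t. SUP e\<in>{..<n}. p e * T e t)"

definition MWP :: "nat \<Rightarrow> (nat \<Rightarrow> ennreal) \<Rightarrow> (nat \<Rightarrow> nat \<Rightarrow> ennreal) \<Rightarrow> ennreal" where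
  "MWP n p T = lim (MWP_avg n p T)"

definition sum_w :: "nat \<Rightarrow> nat \<Rightarrow> ennreal" where
  "sum_w n e = ennreal (1 / real n)"

definition max_w :: "nat \<Rightarrow> ennreal" where
  "max_w e = 1"

definition valid_det :: "nat \<Rightarrow> nat \<Rightarrow> (nat \<Rightarrow> nat set) \<Rightarrow> (nat \<Rightarrow> nat) \<Rightarrow> bool" where
  "valid_det n m s \<sigma> \<longleftrightarrow> det_sched m \<sigma> \<and> valid n m (T_det s \<sigma>) (freq_det \<sigma>)"

definition valid_st :: "nat \<Rightarrow> nat \<Rightarrow> (nat \<Rightarrow> nat set) \<Rightarrow> (nat \<Rightarrow> nat) measure \<Rightarrow> bool" where
  "valid_st n m s M \<longleftrightarrow> stoch_sched m M \<and> valid n m (T_st s M) (freq_st M)"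

definition optD_EMP :: "nat \<Rightarrow> nat \<Rightarrow> (nat \<Rightarrow> nat set) \<Rightarrow> ennreal" where
  "optD_EMP n m s = (INF \<sigma>\<in>{\<sigma>. valid_det n m s \<sigma>}. EMP n (sum_w n) (T_det s \<sigma>))"

definition optD_MEP :: "nat \<Rightarrow> nat \<Rightarrow> (nat \<Rightarrow> nat set) \<Rightarrow> ennreal" where
  "optD_MEP n m s = (INF \<sigma>\<in>{\<sigma>. valid_det n m s \<sigma>}. MEP n (sum_w n) (T_det s \<sigma>))"

definition optD_EEP :: "nat \<Rightarrow> nat \<Rightarrow> (nat \<Rightarrow> nat set) \<Rightarrow> ennreal" where
  "optD_EEP n m s = (INF \<sigma>\<in>{\<sigma>. valid_det n m s \<sigma>}. EEP n (sum_w n) (T_det s \<sigma>))"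

definition optD_WMP :: "nat \<Rightarrow> nat \<Rightarrow> (nat \<Rightarrow> nat set) \<Rightarrow> ennreal" where
  "optD_WMP n m s = (INF \<sigma>\<in>{\<sigma>. valid_det n m s \<sigma>}. WMP n max_w (T_det s \<sigma>))"

definition optD_WEP :: "nat \<Rightarrow> nat \<Rightarrow> (nat \<Rightarrow> nat set) \<Rightarrow> ennreal" where
  "optD_WEP n m s = (INF \<sigma>\<in>{\<sigma>. valid_det n m s \<sigma>}. WEP n max_w (T_det s \<sigma>))"

text \<open>MWP is a limit; the infimum ranges over valid deterministic schedules for which
  this limit exists.\<close>
definition optD_MWP :: "nat \<Rightarrow> nat \<Rightarrow> (nat \<Rightarrow> nat set) \<Rightarrow> ennreal" where
  "optD_MWP n m s = (INF \<sigma>\<in>{\<sigma>. valid_det n m s \<sigma> \<and> convergent (MWP_avg n max_w (T_det s \<sigma>))}.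
      MWP n max_w (T_det s \<sigma>))"

definition opt_SUM :: "nat \<Rightarrow> nat \<Rightarrow> (nat \<Rightarrow> nat set) \<Rightarrow> ennreal" where
  "opt_SUM n m s = (INF M\<in>{M. valid_st n m s M}. EEP n (sum_w n) (T_st s M))"

definition opt_MAX :: "nat \<Rightarrow> nat \<Rightarrow> (nat \<Rightarrow> nat set) \<Rightarrow> ennreal" where
  "opt_MAX n m s = (INF M\<in>{M. valid_st n m s M}. WEP n max_w (T_st s M))"

definition optM_SUM :: "nat \<Rightarrow> nat \<Rightarrow> (nat \<Rightarrow> nat set) \<Rightarrow> ennreal" where
  "optM_SUM n m s = (INF q\<in>{q. test_dist m q}. EEP n (sum_w n) (T_st s (memoryless q)))"

definition optM_MAX :: "nat \<Rightarrow> nat \<Rightarrow> (nat \<Rightarrow> nat set) \<Rightarrow> ennreal" where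
  "optM_MAX n m s = (INF q\<in>{q. test_dist m q}. WEP n max_w (T_st s (memoryless q)))"

end

theory Submission
  imports Defs
begin

text \<open>
  Take n elements and the n singleton tests. A memoryless schedule that runs the test of e
  with probability p e detects e after 1 / p e steps in expectation; some p e is at most 1/n,
  and the sum of the 1 / p e is at least n^2, so both memoryless optima equal n and are
  attained by the uniform distribution. Deterministic schedules do no better on the
  worst-case objectives: at any time the n elements are detected at n distinct times, so the
  last one waits at least n steps, and if e is always detected within g e steps then e is
  tested with density at least 1 / g e, which forces the sum of the g e to be at least
  n^2. The same distinctness makes the average detection time at least (n + 1) / 2 at
  every time, also in expectation under a stochastic schedule, and round robin attains all
  of these bounds. Hence A = n and B = (n + 1) / 2, and A \<ge> (2 - \<epsilon>) B once n \<ge> 2 / \<epsilon>.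
\<close>

lemma INF_eq_minimum:
  fixes f :: "'a \<Rightarrow> 'b :: complete_lattice"
  shows "x \<in> A \<Longrightarrow> f x = c \<Longrightarrow> (\<And>y. y \<in> A \<Longrightarrow> c \<le> f y) \<Longrightarrow> (INF y\<in>A. f y) = c"
  by (auto intro!: cInf_eq_minimum)

lemma sum_inverse_ge_square:
  fixes x :: "'a \<Rightarrow> real"
  assumes "finite A" "\<And>e. e \<in> A \<Longrightarrow> 0 < x e" "(\<Sum>e\<in>A. x e) \<le> 1"
  shows "real (card A) ^ 2 \<le> (\<Sum>e\<in>A. 1 / x e)"
proof -
  define c where "c = real (card A)"
  have tangent: "2 * c - c\<^sup>2 * x e \<le> 1 / x e" if "e \<in> A" for e
  proof -
    have "0 \<le> (c * x e - 1)\<^sup>2" by simp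
    then show ?thesis using assms(2)[OF that] by (simp add: field_simps power2_eq_square)
  qed
  have "c\<^sup>2 \<le> 2 * c * c - c\<^sup>2 * (\<Sum>e\<in>A. x e)"
    using assms(3) mult_left_mono[OF assms(3), of "c\<^sup>2"] by (simp add: power2_eq_square)
  also have "\<dots> = (\<Sum>e\<in>A. 2 * c - c\<^sup>2 * x e)"
    by (simp add: c_def sum_subtractf sum_distrib_left)
  also have "\<dots> \<le> (\<Sum>e\<in>A. 1 / x e)"
    using tangent by (rule sum_mono)
  finally show ?thesis unfolding c_def .
qed

lemma card_le_Max_of_pos:
  fixes S :: "nat set"
  assumes "finite S" "0 \<notin> S" "S \<noteq> {}"
  shows "card S \<le> Max S"
proof -
  have "S \<subseteq> {1..Max S}" using assms by (auto simp: Suc_le_eq intro: Max_ge)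
  then show ?thesis using card_mono[of "{1..Max S}" S] by simp
qed

lemma card_mult_Suc_card_le_double_sum:
  fixes S :: "nat set"
  shows "finite S \<Longrightarrow> 0 \<notin> S \<Longrightarrow> card S * Suc (card S) \<le> 2 * \<Sum> S"
proof (induction "card S" arbitrary: S)
  case (Suc k)
  then have "S \<noteq> {}" by auto
  define x where "x = Max S"
  have x: "x \<in> S" "card S \<le> x"
    using Suc.prems \<open>S \<noteq> {}\<close> card_le_Max_of_pos by (auto simp: x_def)
  define c where "c = card (S - {x})"
  have "k = c" using Suc.hyps(2) Suc.prems(1) x(1) by (simp add: c_def)
  then have "c * Suc c \<le> 2 * \<Sum> (S - {x})"
    using Suc.hyps(1)[of "S - {x}", folded c_def] Suc.prems by simp
  moreover have "\<Sum> S = x + \<Sum> (S - {x})"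
    using Suc.prems x(1) by (simp add: sum.remove)
  moreover have "card S = Suc c"
    unfolding c_def using Suc.prems(1) x(1) by (rule card_Suc_Diff1[symmetric])
  ultimately show ?case using x(2) by (simp add: algebra_simps)
qed simp

lemma bij_betw_lessThan_self:
  fixes f :: "nat \<Rightarrow> nat"
  assumes "inj_on f {..<n}" "\<And>x. x < n \<Longrightarrow> f x < n"
  shows "bij_betw f {..<n} {..<n}"
proof -
  have "f ` {..<n} \<subseteq> {..<n}" using assms(2) by auto
  then show ?thesis using endo_inj_surj[of "{..<n}" f] assms(1) by (simp add: bij_betw_def)
qed

lemma sum_Suc_lessThan: "(\<Sum>i<n. real (Suc i)) = real n * (real n + 1) / 2"
  by (induction n) (simp_all add: field_simps)

lemma sum_bij_betw_lessThan_Suc: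
  "bij_betw f {..<n} {..<n} \<Longrightarrow> (\<Sum>x<n. real (Suc (f x))) = real n * (real n + 1) / 2"
  using sum.reindex_bij_betw[of f "{..<n}" "{..<n}" "\<lambda>i. real (Suc i)"] sum_Suc_lessThan by simp

lemma suminf_geometric_ennreal:
  fixes p :: real
  assumes "0 \<le> p" "p \<le> 1"
  shows "(\<Sum>k. ennreal ((1 - p) ^ k)) = inverse (ennreal p)"
proof (cases "p = 0")
  case True
  then show ?thesis
    using summable_iff_suminf_neq_top[of "\<lambda>_. 1::real"] by (simp add: summable_const_iff)
next
  case False
  then have "(\<lambda>k. (1 - p) ^ k) sums (1 / p)"
    using geometric_sums[of "1 - p"] assms by simp
  then have "(\<Sum>k. ennreal ((1 - p) ^ k)) = ennreal (1 / p)"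
    by (rule suminf_ennreal_eq[rotated]) (use assms in simp)
  then show ?thesis using False assms by (simp add: inverse_ennreal inverse_eq_divide)
qed

section \<open>Ces\<agrave>ro means\<close>

lemma cesaro_ge:
  assumes "\<And>t. b \<le> f t" "H > 0"
  shows "b \<le> cesaro f H"
proof -
  have "of_nat H * b / of_nat H \<le> (\<Sum>t<H. f t) / of_nat H"
    using sum_mono[of "{..<H}" "\<lambda>_. b" f] assms(1) by (intro divide_right_mono_ennreal) simp
  then show ?thesis
    using assms(2) by (simp add: cesaro_def mult.commute[of "of_nat H"] mult_divide_eq_ennreal)
qed

lemma cesaro_const: "H > 0 \<Longrightarrow> cesaro (\<lambda>_. c) H = c"
  by (simp add: cesaro_def mult.commute[of "of_nat H"] mult_divide_eq_ennreal)

lemma LIMSEQ_cesaro_const: "cesaro (\<lambda>_. c) \<longlonglongrightarrow> c"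
  by (rule Lim_transform_eventually[OF tendsto_const])
    (auto simp: eventually_sequentially cesaro_const intro!: exI[of _ 1])

lemma cesaro_sum: "cesaro (\<lambda>t. \<Sum>e\<in>A. f e t) H = (\<Sum>e\<in>A. cesaro (f e) H)"
  unfolding cesaro_def divide_ennreal_def by (simp add: sum.swap[of _ A] sum_distrib_right)

lemma cesaro_cmult: "cesaro (\<lambda>t. c * f t) H = c * cesaro f H"
  unfolding cesaro_def divide_ennreal_def by (simp only: sum_distrib_left[symmetric] mult.assoc)

lemma lim_ge_ennreal:
  fixes f :: "nat \<Rightarrow> ennreal"
  assumes "convergent f" "\<And>H. H > 0 \<Longrightarrow> b \<le> f H"
  shows "b \<le> lim f"
  using assms
  by (intro LIMSEQ_le_const[of f]) (auto simp: convergent_LIMSEQ_iff intro!: exI[of _ 1])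

lemma cesaro_ennreal:
  assumes "\<And>t. 0 \<le> g t"
  shows "cesaro (\<lambda>t. ennreal (g t)) H = ennreal ((\<Sum>t<H. g t) / real H)"
proof (cases "H = 0")
  case False
  then show ?thesis
    using assms by (simp add: cesaro_def sum_ennreal sum_nonneg divide_ennreal
        ennreal_of_nat_eq_real_of_nat)
qed (simp add: cesaro_def)

lemma periodic_eq_mod:
  fixes g :: "nat \<Rightarrow> 'a" and p t :: nat
  assumes "p > 0" "\<And>t. g (t + p) = g t"
  shows "g t = g (t mod p)"
proof (induction t rule: less_induct)
  case (less t)
  show ?case
  proof (cases "t < p")
    case False
    then have "g t = g (t - p)" using assms(2)[of "t - p"] by simp
    also have "\<dots> = g (t mod p)" using less assms(1) False by (simp add: le_mod_geq)
    finally show ?thesis .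
  qed simp
qed

lemma periodic_sum_lessThan:
  fixes g :: "nat \<Rightarrow> 'a :: comm_semiring_1"
  assumes p: "p > 0" and per: "\<And>t. g (t + p) = g t"
  shows "(\<Sum>t<N. g t) = of_nat (N div p) * (\<Sum>t<p. g t) + (\<Sum>t<N mod p. g t)"
proof (induction N)
  case (Suc N)
  have gN: "g N = g (N mod p)" using periodic_eq_mod[of p g, OF p per] .
  show ?case
  proof (cases "Suc (N mod p) = p")
    case True
    then have "Suc N div p = Suc (N div p)" "Suc N mod p = 0"
      "(\<Sum>t<p. g t) = (\<Sum>t<N mod p. g t) + g (N mod p)"
      using p by (auto simp: div_Suc mod_Suc simp flip: sum.lessThan_Suc)
    then show ?thesis using Suc gN by (simp add: algebra_simps)
  next
    case False
    then have "Suc N div p = N div p" "Suc N mod p = Suc (N mod p)"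
      using p by (simp_all add: div_Suc mod_Suc)
    then show ?thesis using Suc gN by (simp add: add.assoc)
  qed
qed simp

lemma LIMSEQ_periodic_average:
  fixes g :: "nat \<Rightarrow> real"
  assumes p: "p > 0" and per: "\<And>t. g (t + p) = g t" and nonneg: "\<And>t. 0 \<le> g t"
  shows "(\<lambda>N. (\<Sum>t<N. g t) / real N) \<longlonglongrightarrow> (\<Sum>t<p. g t) / real p"
proof -
  define S where "S = (\<Sum>t<p. g t)"
  have close: "\<bar>(\<Sum>t<N. g t) / real N - S / real p\<bar> \<le> S / real N" if "N > 0" for N
  proof -
    define R where "R = (\<Sum>t<N mod p. g t)"
    have "0 \<le> R" "R \<le> S"
      unfolding R_def S_def using p nonneg by (auto intro: sum_nonneg sum_mono2)
    moreover have "0 \<le> real (N mod p) * S / real p" "real (N mod p) * S / real p \<le> S"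
      using p \<open>0 \<le> R\<close> \<open>R \<le> S\<close> mult_right_mono[of "real (N mod p)" "real p" S]
      by (auto simp: divide_le_eq mult.commute)
    moreover have "(\<Sum>t<N. g t) - real N * S / real p = R - real (N mod p) * S / real p"
    proof -
      have "(\<Sum>t<N. g t) = real (N div p) * S + R"
        unfolding R_def S_def by (rule periodic_sum_lessThan[of p g, OF p per])
      moreover have "real N = real (N div p) * real p + real (N mod p)"
        by (metis div_mult_mod_eq of_nat_add of_nat_mult)
      ultimately show ?thesis using p by (simp add: field_simps)
    qed
    ultimately have "\<bar>(\<Sum>t<N. g t) - real N * S / real p\<bar> / real N \<le> S / real N"
      by (intro divide_right_mono) linarith+
    moreover have "(\<Sum>t<N. g t) / real N - S / real p = ((\<Sum>t<N. g t) - real N * S / real p) / real N"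
      using that by (simp add: diff_divide_distrib)
    ultimately show ?thesis by (simp add: abs_divide)
  qed
  have "eventually (\<lambda>N. norm ((\<Sum>t<N. g t) / real N - S / real p) \<le> S / real N) sequentially"
    using close by (auto simp: eventually_sequentially intro!: exI[of _ 1])
  then have "(\<lambda>N. (\<Sum>t<N. g t) / real N - S / real p) \<longlonglongrightarrow> 0"
    by (rule Lim_null_comparison) (rule lim_const_over_n)
  then show ?thesis unfolding S_def by (simp add: LIM_zero_iff)
qed

lemma LIMSEQ_cesaro_periodic:
  fixes g :: "nat \<Rightarrow> real"
  assumes "p > 0" "\<And>t. g (t + p) = g t" "\<And>t. 0 \<le> g t"
  shows "cesaro (\<lambda>t. ennreal (g t)) \<longlonglongrightarrow> ennreal ((\<Sum>t<p. g t) / real p)"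
  unfolding cesaro_ennreal[of g, OF assms(3)]
  by (intro tendsto_ennrealI LIMSEQ_periodic_average assms)

lemma Et_const:
  assumes "\<And>t. T e t = c"
  shows "Et T e = c"
proof -
  have "T e = (\<lambda>_. c)" using assms by auto
  then show ?thesis unfolding Et_def using LIMSEQ_cesaro_const[of c] by (simp add: limI)
qed

lemma max_w_eq_1 [simp]: "max_w e = 1"
  by (simp add: max_w_def)

lemma of_nat_mult_sum_w: "n \<ge> 1 \<Longrightarrow> of_nat n * sum_w n e = 1"
  by (simp add: sum_w_def ennreal_of_nat_eq_real_of_nat ennreal_mult'[symmetric])

lemma sum_sum_w_const: "n \<ge> 1 \<Longrightarrow> (\<Sum>e<n. sum_w n e * c) = c"
  using of_nat_mult_sum_w[of n 0] by (simp add: sum_w_def mult.assoc[symmetric])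

lemma sum_sum_w_le_SUP:
  assumes "n \<ge> 1"
  shows "(\<Sum>e<n. sum_w n e * x e) \<le> (SUP e\<in>{..<n}. x e)"
proof -
  have "(\<Sum>e<n. sum_w n e * x e) \<le> (\<Sum>e<n. sum_w n e * (SUP e\<in>{..<n}. x e))"
    by (intro sum_mono mult_left_mono SUP_upper) auto
  then show ?thesis using sum_sum_w_const[OF assms] by simp
qed

lemma sum_sum_w_ennreal:
  assumes "\<And>e. e < n \<Longrightarrow> 0 \<le> x e"
  shows "(\<Sum>e<n. sum_w n e * ennreal (x e)) = ennreal ((\<Sum>e<n. x e) / real n)"
proof -
  have "(\<Sum>e<n. sum_w n e * ennreal (x e)) = (\<Sum>e<n. ennreal (x e / real n))"
    by (simp add: sum_w_def ennreal_mult'[symmetric])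
  also have "\<dots> = ennreal (\<Sum>e<n. x e / real n)"
    using assms by (intro sum_ennreal) simp
  finally show ?thesis by (simp add: sum_divide_distrib)
qed

lemma first_hit_eq_suminf:
  fixes P :: "nat \<Rightarrow> bool"
  shows "(if \<exists>h. P h then of_nat (1 + (LEAST h. P h)) else \<infinity>) =
     (\<Sum>k. of_bool (\<forall>j<k. \<not> P j) :: ennreal)"
proof (cases "\<exists>h. P h")
  case True
  define L where "L = (LEAST h. P h)"
  have avoid_iff: "(\<forall>j<k. \<not> P j) \<longleftrightarrow> k \<le> L" for k
    using LeastI_ex[OF True] not_less_Least[of _ P] unfolding L_def
    by (meson leI order_less_le_trans)
  have "(\<Sum>k. of_bool (\<forall>j<k. \<not> P j) :: ennreal) = (\<Sum>k\<le>L. 1)"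
    by (subst suminf_finite[of "{..L}"]) (auto simp: avoid_iff)
  then show ?thesis using True by (simp add: L_def)
next
  case False
  have "(\<Sum>k. 1 :: ennreal) = \<infinity>"
    using summable_iff_suminf_neq_top[of "\<lambda>_. 1::real"] by (simp add: summable_const_iff)
  then show ?thesis using False by simp
qed

definition untested :: "(nat \<Rightarrow> nat set) \<Rightarrow> nat \<Rightarrow> nat \<Rightarrow> nat \<Rightarrow> (nat \<Rightarrow> nat) set" where
  "untested s e t k = {\<sigma>. \<forall>j<k. e \<notin> s (\<sigma> (t + j))}"

lemma hit_eq_suminf_indicator: "hit s e \<sigma> t = (\<Sum>k. indicator (untested s e t k) \<sigma> :: ennreal)"
  unfolding hit_def untested_def first_hit_eq_suminf[of "\<lambda>h. e \<in> s (\<sigma> (t + h))"]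
  by (simp add: indicator_def)

lemma space_seq_space [simp]: "space seq_space = UNIV"
  by (simp add: seq_space_def space_PiM)

lemma measurable_seq_space_component:
  "(\<lambda>\<sigma>. \<sigma> t) \<in> measurable seq_space (count_space UNIV)"
  unfolding seq_space_def by (rule measurable_component_singleton) simp

lemma untested_in_sets: "untested s e t k \<in> sets seq_space"
proof -
  have "untested s e t k = {\<sigma> \<in> space seq_space. \<forall>j\<in>{..<k}. e \<notin> s (\<sigma> (t + j))}"
    by (auto simp: untested_def)
  also have "\<dots> \<in> sets seq_space"
    by (intro sets.sets_Collect_finite_All
        measurable_sets_Collect[OF measurable_seq_space_component]) auto
  finally show ?thesis .
qed

lemma borel_measurable_hit: "(\<lambda>\<sigma>. hit s e \<sigma> t) \<in> borel_measurable seq_space"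
  unfolding hit_eq_suminf_indicator
  by (intro borel_measurable_suminf_order borel_measurable_indicator untested_in_sets)

lemma T_st_eq_suminf_emeasure_untested:
  assumes "sets M = sets seq_space"
  shows "T_st s M e t = (\<Sum>k. emeasure M (untested s e t k))"
proof -
  have "T_st s M e t = (\<Sum>k. \<integral>\<^sup>+ \<sigma>. indicator (untested s e t k) \<sigma> \<partial>M)"
    unfolding T_st_def hit_eq_suminf_indicator using assms
    by (intro nn_integral_suminf borel_measurable_indicator) (simp add: untested_in_sets)
  then show ?thesis using assms untested_in_sets by simp
qed

lemma T_st_return: "T_st s (return seq_space \<sigma>) = T_det s \<sigma>"
  unfolding T_st_def T_det_def by (intro ext nn_integral_return) (auto simp: borel_measurable_hit)

lemma freq_st_return: "freq_st (return seq_space \<sigma>) = freq_det \<sigma>"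
proof (intro ext)
  fix i t
  have "{\<sigma>' \<in> space seq_space. \<sigma>' t = i} \<in> sets seq_space"
    by (rule measurable_sets_Collect[OF measurable_seq_space_component]) simp
  then show "freq_st (return seq_space \<sigma>) i t = freq_det \<sigma> i t"
    by (simp add: freq_st_def freq_det_def emeasure_return)
qed

lemma stoch_sched_return:
  assumes "det_sched m \<sigma>"
  shows "stoch_sched m (return seq_space \<sigma>)"
proof -
  have "Measurable.pred seq_space (\<lambda>\<sigma>'. \<forall>t. \<sigma>' t < m)"
    unfolding pred_def
    by (intro sets.sets_Collect_countable_All
        measurable_sets_Collect[OF measurable_seq_space_component]) simp
  then show ?thesis
    using assms unfolding stoch_sched_def det_sched_def
    by (subst AE_return) (simp_all add: prob_space_return)
qed

lemma valid_st_return: "valid_det n m s \<sigma> \<Longrightarrow> valid_st n m s (return seq_space \<sigma>)"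
  by (simp add: valid_det_def valid_st_def T_st_return freq_st_return stoch_sched_return)

definition singletons :: "nat \<Rightarrow> nat set" where
  "singletons i = {i}"

lemma is_instance_singletons: "n \<ge> 1 \<Longrightarrow> is_instance n n singletons"
  unfolding is_instance_def singletons_def by auto

definition wait_time :: "(nat \<Rightarrow> nat) \<Rightarrow> nat \<Rightarrow> nat \<Rightarrow> nat" where
  "wait_time \<sigma> t e = (LEAST h. \<sigma> (t + h) = e)"

lemma hit_singletons:
  "hit singletons e \<sigma> t = (if \<exists>h. \<sigma> (t + h) = e then of_nat (Suc (wait_time \<sigma> t e)) else \<infinity>)"
  unfolding hit_def singletons_def wait_time_def by (simp add: eq_commute)

lemma wait_time_visits: "\<exists>h. \<sigma> (t + h) = e \<Longrightarrow> \<sigma> (t + wait_time \<sigma> t e) = e"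
  unfolding wait_time_def by (rule LeastI_ex)

lemma wait_time_le: "\<sigma> (t + h) = e \<Longrightarrow> wait_time \<sigma> t e \<le> h"
  unfolding wait_time_def by (rule Least_le)

lemma inj_on_wait_time: "(\<And>e. e \<in> A \<Longrightarrow> \<exists>h. \<sigma> (t + h) = e) \<Longrightarrow> inj_on (wait_time \<sigma> t) A"
  by (metis inj_onI wait_time_visits)

lemma hit_singletons_SUP_ge:
  assumes "n \<ge> 1"
  shows "of_nat n \<le> (SUP e\<in>{..<n}. hit singletons e \<sigma> t)"
proof (cases "\<forall>e<n. \<exists>h. \<sigma> (t + h) = e")
  case True
  define S where "S = (\<lambda>e. Suc (wait_time \<sigma> t e)) ` {..<n}"
  have "card S = n"
    unfolding S_def using inj_on_wait_time[of "{..<n}" \<sigma> t] True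
    by (subst card_image) (auto simp: inj_on_def)
  moreover have S: "finite S" "0 \<notin> S" "S \<noteq> {}"
    using assms by (auto simp: S_def lessThan_empty_iff)
  ultimately have "n \<le> Max S"
    using card_le_Max_of_pos[of S] by simp
  moreover have "Max S \<in> S" using S by simp
  ultimately obtain e where "e < n" "n \<le> Suc (wait_time \<sigma> t e)"
    by (auto simp: S_def)
  then show ?thesis
    using True by (intro SUP_upper2[of e]) (auto simp: hit_singletons simp del: of_nat_Suc)
next
  case False
  then obtain e where "e < n" "hit singletons e \<sigma> t = \<infinity>"
    by (auto simp: hit_singletons)
  then show ?thesis by (intro SUP_upper2[of e]) auto
qed

lemma hit_singletons_average_ge:
  assumes "n \<ge> 1"
  shows "ennreal ((real n + 1) / 2) \<le> (\<Sum>e<n. sum_w n e * hit singletons e \<sigma> t)"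
proof (cases "\<forall>e<n. \<exists>h. \<sigma> (t + h) = e")
  case True
  define S where "S = (\<lambda>e. Suc (wait_time \<sigma> t e)) ` {..<n}"
  have inj: "inj_on (\<lambda>e. Suc (wait_time \<sigma> t e)) {..<n}"
    using inj_on_wait_time[of "{..<n}" \<sigma> t] True by (auto simp: inj_on_def)
  moreover have "0 \<notin> S" by (auto simp: S_def)
  ultimately have "n * Suc n \<le> 2 * (\<Sum>e<n. Suc (wait_time \<sigma> t e))"
    using card_mult_Suc_card_le_double_sum[of S] by (simp add: S_def card_image sum.reindex)
  then have "real n * (real n + 1) \<le> 2 * (\<Sum>e<n. real (Suc (wait_time \<sigma> t e)))"
    by (simp only: of_nat_le_iff[symmetric, where 'a=real]) (simp add: algebra_simps)
  then have "(real n + 1) / 2 \<le> (\<Sum>e<n. real (Suc (wait_time \<sigma> t e))) / real n"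
    using assms by (simp add: field_simps)
  moreover have "(\<Sum>e<n. sum_w n e * hit singletons e \<sigma> t) =
      ennreal ((\<Sum>e<n. real (Suc (wait_time \<sigma> t e))) / real n)"
    using True by (simp add: hit_singletons ennreal_of_nat_eq_real_of_nat sum_sum_w_ennreal
        del: of_nat_Suc)
  ultimately show ?thesis by (metis ennreal_leI)
next
  case False
  then obtain e where "e < n" "hit singletons e \<sigma> t = \<infinity>"
    by (auto simp: hit_singletons)
  then have "\<top> = sum_w n e * hit singletons e \<sigma> t"
    using assms by (simp add: sum_w_def ennreal_mult_top)
  also have "\<dots> \<le> (\<Sum>e<n. sum_w n e * hit singletons e \<sigma> t)"
    using \<open>e < n\<close> by (intro member_le_sum) auto
  finally have "(\<Sum>e<n. sum_w n e * hit singletons e \<sigma> t) = \<top>"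
    by (simp only: top_unique)
  then show ?thesis by (simp only: top_greatest)
qed

section \<open>Memoryless schedules\<close>

lemma sets_memoryless: "sets (memoryless q) = sets seq_space"
  unfolding memoryless_def seq_space_def by (intro sets_PiM_cong) auto

lemma emeasure_memoryless_untested_singletons:
  "emeasure (memoryless q) (untested singletons e t k) = ennreal ((1 - pmf q e) ^ k)"
proof -
  have "untested singletons e t k =
      prod_emb UNIV (\<lambda>_. measure_pmf q) {t..<t+k} (Pi\<^sub>E {t..<t+k} (\<lambda>_. UNIV - {e}))"
    by (auto simp: untested_def singletons_def prod_emb_def space_PiM PiE_iff le_iff_add) fastforce+
  then have "emeasure (memoryless q) (untested singletons e t k) =
      (\<Prod>i\<in>{t..<t+k}. emeasure (measure_pmf q) (UNIV - {e}))"
    unfolding memoryless_def by (simp add: emeasure_PiM_emb measure_pmf.prob_space_axioms)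
  also have "emeasure (measure_pmf q) (UNIV - {e}) = ennreal (1 - pmf q e)"
    using measure_pmf.prob_compl[of "{e}" q]
    by (simp add: measure_pmf.emeasure_eq_measure measure_pmf_single)
  finally show ?thesis by (simp add: ennreal_power pmf_le_1)
qed

lemma T_st_memoryless_singletons:
  "T_st singletons (memoryless q) e t = inverse (ennreal (pmf q e))"
  unfolding T_st_eq_suminf_emeasure_untested[OF sets_memoryless]
    emeasure_memoryless_untested_singletons
  by (rule suminf_geometric_ennreal) (simp_all add: pmf_le_1)

lemma Et_memoryless_singletons:
  "Et (T_st singletons (memoryless q)) e = inverse (ennreal (pmf q e))"
  by (rule Et_const) (rule T_st_memoryless_singletons)

lemma of_nat_le_inverse_ennreal:
  assumes "0 \<le> p" "p \<le> 1 / real n"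
  shows "of_nat n \<le> inverse (ennreal p)"
proof (cases "p = 0")
  case False
  then have "real n \<le> inverse p" using assms by (cases "n = 0") (simp_all add: field_simps)
  then show ?thesis
    using False assms(1) by (simp add: inverse_ennreal ennreal_of_nat_eq_real_of_nat ennreal_leI)
qed simp

lemma sum_pmf_le_1: "finite A \<Longrightarrow> (\<Sum>e\<in>A. pmf q e) \<le> 1"
  using measure_measure_pmf_finite[of A q] measure_pmf.prob_le_1[of q A] by simp

lemma ex_pmf_le_inverse:
  assumes "n \<ge> 1"
  shows "\<exists>e<n. pmf q e \<le> 1 / real n"
proof (rule ccontr)
  assume "\<not> ?thesis"
  then have "(\<Sum>e<n. 1 / real n) < (\<Sum>e<n. pmf q e)"
    using assms by (intro sum_strict_mono) (auto simp: lessThan_empty_iff)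
  then show False using sum_pmf_le_1[of "{..<n}" q] assms by simp
qed

lemma WEP_memoryless_singletons_ge:
  assumes "n \<ge> 1"
  shows "of_nat n \<le> WEP n max_w (T_st singletons (memoryless q))"
proof -
  obtain e where "e < n" "pmf q e \<le> 1 / real n"
    using ex_pmf_le_inverse[OF assms] by blast
  then show ?thesis
    unfolding WEP_def Et_memoryless_singletons
    by (intro SUP_upper2[of e]) (auto intro: of_nat_le_inverse_ennreal)
qed

lemma EEP_memoryless_singletons_ge:
  assumes "n \<ge> 1"
  shows "of_nat n \<le> EEP n (sum_w n) (T_st singletons (memoryless q))"
proof (cases "\<exists>e<n. pmf q e = 0")
  case True
  then obtain e where "e < n" "pmf q e = 0" by blast
  then have "sum_w n e * Et (T_st singletons (memoryless q)) e = \<infinity>"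
    using assms by (simp add: Et_memoryless_singletons sum_w_def ennreal_mult_top)
  moreover have "sum_w n e * Et (T_st singletons (memoryless q)) e
      \<le> EEP n (sum_w n) (T_st singletons (memoryless q))"
    unfolding EEP_def using \<open>e < n\<close> by (intro member_le_sum) auto
  ultimately show ?thesis by (simp add: top_unique)
next
  case False
  then have pos: "\<And>e. e < n \<Longrightarrow> 0 < pmf q e" using pmf_nonneg[of q] by (metis order_less_le)
  have "real n ^ 2 \<le> (\<Sum>e<n. 1 / pmf q e)"
    using sum_inverse_ge_square[of "{..<n}" "pmf q"] pos sum_pmf_le_1[of "{..<n}" q] by simp
  then have "real n \<le> (\<Sum>e<n. 1 / pmf q e) / real n"
    using assms by (simp add: field_simps power2_eq_square)
  moreover have "EEP n (sum_w n) (T_st singletons (memoryless q)) =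
      (\<Sum>e<n. sum_w n e * ennreal (1 / pmf q e))"
    unfolding EEP_def Et_memoryless_singletons
    using pos by (intro sum.cong) (simp_all add: inverse_ennreal inverse_eq_divide)
  then have "EEP n (sum_w n) (T_st singletons (memoryless q)) =
      ennreal ((\<Sum>e<n. 1 / pmf q e) / real n)"
    by (simp add: sum_sum_w_ennreal)
  ultimately show ?thesis by (simp add: ennreal_of_nat_eq_real_of_nat ennreal_leI)
qed

lemma test_dist_uniform: "n \<ge> 1 \<Longrightarrow> test_dist n (pmf_of_set {..<n})"
  unfolding test_dist_def by (subst set_pmf_of_set) (auto simp: lessThan_empty_iff)

lemma Et_memoryless_uniform_singletons:
  assumes "n \<ge> 1" "e < n"
  shows "Et (T_st singletons (memoryless (pmf_of_set {..<n}))) e = of_nat n"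
proof -
  have "pmf (pmf_of_set {..<n}) e = 1 / real n"
    using assms by (simp add: lessThan_empty_iff)
  then show ?thesis
    using assms
    by (simp add: Et_memoryless_singletons inverse_ennreal ennreal_of_nat_eq_real_of_nat)
qed

lemma WEP_memoryless_uniform_singletons:
  "n \<ge> 1 \<Longrightarrow> WEP n max_w (T_st singletons (memoryless (pmf_of_set {..<n}))) = of_nat n"
  by (simp add: WEP_def Et_memoryless_uniform_singletons lessThan_empty_iff)

lemma EEP_memoryless_uniform_singletons:
  "n \<ge> 1 \<Longrightarrow> EEP n (sum_w n) (T_st singletons (memoryless (pmf_of_set {..<n}))) = of_nat n"
  by (simp add: EEP_def Et_memoryless_uniform_singletons sum_sum_w_const)

lemma optM_MAX_singletons: "n \<ge> 1 \<Longrightarrow> optM_MAX n n singletons = of_nat n"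
  unfolding optM_MAX_def
  by (rule INF_eq_minimum[of "pmf_of_set {..<n}"])
    (simp_all add: test_dist_uniform WEP_memoryless_uniform_singletons WEP_memoryless_singletons_ge)

lemma optM_SUM_singletons: "n \<ge> 1 \<Longrightarrow> optM_SUM n n singletons = of_nat n"
  unfolding optM_SUM_def
  by (rule INF_eq_minimum[of "pmf_of_set {..<n}"])
    (simp_all add: test_dist_uniform EEP_memoryless_uniform_singletons EEP_memoryless_singletons_ge)

section \<open>Lower bounds for arbitrary schedules\<close>

lemma EEP_WEP_ge:
  assumes n: "n \<ge> 1"
    and bound: "\<And>t. b \<le> (\<Sum>e<n. sum_w n e * T e t)"
    and conv: "\<And>e. e < n \<Longrightarrow> convergent (cesaro (\<lambda>t. T e t))"
  shows "b \<le> EEP n (sum_w n) T" "b \<le> WEP n max_w T"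
proof -
  have "(\<lambda>H. \<Sum>e<n. sum_w n e * cesaro (\<lambda>t. T e t) H) \<longlonglongrightarrow> EEP n (sum_w n) T"
    unfolding EEP_def Et_def using conv
    by (intro tendsto_sum ennreal_tendsto_cmult) (auto simp: convergent_LIMSEQ_iff sum_w_def)
  moreover have "\<forall>H\<ge>1. b \<le> (\<Sum>e<n. sum_w n e * cesaro (\<lambda>t. T e t) H)"
    unfolding cesaro_cmult[symmetric] cesaro_sum[symmetric] using bound by (auto intro: cesaro_ge)
  ultimately show "b \<le> EEP n (sum_w n) T"
    by (blast intro: LIMSEQ_le_const)
  also have "\<dots> \<le> WEP n max_w T"
    unfolding EEP_def WEP_def using sum_sum_w_le_SUP[OF n] by simp
  finally show "b \<le> WEP n max_w T" .
qed

lemma MEP_ge: "(\<And>t. b \<le> (\<Sum>e<n. p e * T e t)) \<Longrightarrow> b \<le> MEP n p T"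
  unfolding MEP_def by (rule SUP_upper2[of 0]) auto

lemma WMP_ge:
  assumes "b \<le> (SUP e\<in>{..<n}. T e 0)"
  shows "b \<le> WMP n max_w T"
proof -
  have "(SUP e\<in>{..<n}. T e 0) \<le> WMP n max_w T"
    unfolding WMP_def by (intro SUP_mono) (auto intro: SUP_upper)
  then show ?thesis using assms by (rule order_trans[rotated])
qed

lemma MWP_ge:
  assumes "convergent (MWP_avg n max_w T)" "\<And>t. b \<le> (SUP e\<in>{..<n}. T e t)"
  shows "b \<le> MWP n max_w T"
  unfolding MWP_def using assms
  by (intro lim_ge_ennreal) (auto simp: MWP_avg_def intro: cesaro_ge)

lemma T_st_singletons_average_ge:
  assumes n: "n \<ge> 1" and M: "stoch_sched m M"
  shows "ennreal ((real n + 1) / 2) \<le> (\<Sum>e<n. sum_w n e * T_st singletons M e t)"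
proof -
  have prob: "prob_space M" and sets: "sets M = sets seq_space"
    using M by (auto simp: stoch_sched_def)
  have meas: "(\<lambda>\<sigma>. hit singletons e \<sigma> t) \<in> borel_measurable M" for e
    using measurable_cong_sets[OF sets refl] borel_measurable_hit by blast
  have "ennreal ((real n + 1) / 2) = (\<integral>\<^sup>+ \<sigma>. ennreal ((real n + 1) / 2) \<partial>M)"
    using prob_space.emeasure_space_1[OF prob] by simp
  also have "\<dots> \<le> (\<integral>\<^sup>+ \<sigma>. (\<Sum>e<n. sum_w n e * hit singletons e \<sigma> t) \<partial>M)"
    by (intro nn_integral_mono hit_singletons_average_ge n)
  also have "\<dots> = (\<Sum>e<n. sum_w n e * T_st singletons M e t)"
    unfolding T_st_def using meas by (simp add: nn_integral_sum nn_integral_cmult)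
  finally show ?thesis .
qed

lemma window_le_card_visits:
  assumes "\<And>t. \<exists>h<g. \<sigma> (t + h) = e"
  shows "k \<le> card {j\<in>{..<k * g}. \<sigma> j = e}"
proof (induction k)
  case (Suc k)
  obtain h where h: "h < g" "\<sigma> (k * g + h) = e" using assms by blast
  have "insert (k * g + h) {j\<in>{..<k * g}. \<sigma> j = e} \<subseteq> {j\<in>{..<Suc k * g}. \<sigma> j = e}"
    using h by auto
  then have "card (insert (k * g + h) {j\<in>{..<k * g}. \<sigma> j = e}) \<le> card {j\<in>{..<Suc k * g}. \<sigma> j = e}"
    by (intro card_mono) auto
  then show ?case using Suc by simp
qed simp

lemma sum_card_visits_le: "(\<Sum>e\<in>A. card {j\<in>{..<L}. \<sigma> j = e}) \<le> L"
proof (cases "finite A")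
  case True
  have "(\<Sum>e\<in>A. card {j\<in>{..<L}. \<sigma> j = e}) = card (\<Union>e\<in>A. {j\<in>{..<L}. \<sigma> j = e})"
    using True by (intro card_UN_disjoint[symmetric]) auto
  also have "\<dots> \<le> card {..<L}" by (intro card_mono) auto
  finally show ?thesis by simp
qed simp

lemma sum_inverse_window_le_1:
  fixes g :: "nat \<Rightarrow> nat"
  assumes window: "\<And>e t. e \<in> A \<Longrightarrow> \<exists>h<g e. \<sigma> (t + h) = e"
  shows "(\<Sum>e\<in>A. 1 / real (g e)) \<le> 1"
proof (cases "finite A")
  case True
  \<comment> \<open>Count the tests of each e during the first P steps, P a common multiple of
    all window lengths.\<close>
  define P where "P = (\<Prod>e\<in>A. g e)"
  have "0 < g e" if "e \<in> A" for e using window[OF that, of 0] by auto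
  then have "P > 0" "\<And>e. e \<in> A \<Longrightarrow> g e dvd P"
    using True by (auto simp: P_def dvd_prodI)
  have "P div g e \<le> card {j\<in>{..<P}. \<sigma> j = e}" if "e \<in> A" for e
    using window_le_card_visits[of "g e" \<sigma> e "P div g e"] window[OF that]
      \<open>\<And>e. e \<in> A \<Longrightarrow> g e dvd P\<close>[OF that] by simp
  then have "(\<Sum>e\<in>A. P div g e) \<le> (\<Sum>e\<in>A. card {j\<in>{..<P}. \<sigma> j = e})"
    by (rule sum_mono)
  also have "\<dots> \<le> P" by (rule sum_card_visits_le)
  finally have "real (\<Sum>e\<in>A. P div g e) \<le> real P"
    by (simp only: of_nat_le_iff)
  moreover have "real (\<Sum>e\<in>A. P div g e) = real P * (\<Sum>e\<in>A. 1 / real (g e))"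
    using \<open>\<And>e. e \<in> A \<Longrightarrow> g e dvd P\<close>
    by (simp add: real_of_nat_div sum_distrib_left)
  ultimately show ?thesis using \<open>P > 0\<close> by simp
qed simp

lemma EMP_singletons_ge:
  assumes n: "n \<ge> 1" and finite: "\<And>e. e < n \<Longrightarrow> Mt (T_det singletons \<sigma>) e < \<top>"
  shows "of_nat n \<le> EMP n (sum_w n) (T_det singletons \<sigma>)"
proof -
  \<comment> \<open>e is detected within g e steps from any time, so it is tested in every window
    of g e steps.\<close>
  define g where "g e = nat \<lfloor>enn2real (Mt (T_det singletons \<sigma>) e)\<rfloor>" for e
  have Mt: "Mt (T_det singletons \<sigma>) e = ennreal (enn2real (Mt (T_det singletons \<sigma>) e))"
    if "e < n" for e
    using finite[OF that] by simp
  have window: "\<exists>h<g e. \<sigma> (t + h) = e" if e: "e < n" for e t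
  proof -
    have le: "hit singletons e \<sigma> t \<le> Mt (T_det singletons \<sigma>) e"
      unfolding Mt_def T_det_def by (rule SUP_upper) simp
    then have visits: "\<exists>h. \<sigma> (t + h) = e"
      using finite[OF e] by (auto simp: hit_singletons split: if_splits)
    then have "ennreal (real (Suc (wait_time \<sigma> t e)))
        \<le> ennreal (enn2real (Mt (T_det singletons \<sigma>) e))"
      using le Mt[OF e] by (simp add: hit_singletons ennreal_of_nat_eq_real_of_nat del: of_nat_Suc)
    then have "Suc (wait_time \<sigma> t e) \<le> g e"
      by (simp add: g_def ennreal_le_iff le_nat_floor del: of_nat_Suc)
    then show ?thesis using wait_time_visits[OF visits] by (intro exI[of _ "wait_time \<sigma> t e"]) auto
  qed
  have pos: "0 < g e" if "e < n" for e
    using window[OF that, of 0] by auto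
  have "real n ^ 2 \<le> (\<Sum>e<n. 1 / (1 / real (g e)))"
    using sum_inverse_ge_square[of "{..<n}" "\<lambda>e. 1 / real (g e)"]
      sum_inverse_window_le_1[of "{..<n}" g \<sigma>] window pos by simp
  then have "real n \<le> (\<Sum>e<n. real (g e)) / real n"
    using n by (simp add: field_simps power2_eq_square)
  then have "of_nat n \<le> (\<Sum>e<n. sum_w n e * ennreal (real (g e)))"
    by (simp add: sum_sum_w_ennreal ennreal_of_nat_eq_real_of_nat ennreal_leI)
  also have "\<dots> \<le> EMP n (sum_w n) (T_det singletons \<sigma>)"
  proof (unfold EMP_def, intro sum_mono mult_left_mono)
    fix e assume "e \<in> {..<n}"
    have "real (g e) \<le> enn2real (Mt (T_det singletons \<sigma>) e)" by (simp add: g_def)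
    then show "ennreal (real (g e)) \<le> Mt (T_det singletons \<sigma>) e"
      using Mt \<open>e \<in> {..<n}\<close> by (metis ennreal_leI lessThan_iff)
  qed simp
  finally show ?thesis .
qed

section \<open>Round robin\<close>

definition round_robin :: "nat \<Rightarrow> nat \<Rightarrow> nat" where
  "round_robin n t = t mod n"

lemma round_robin_visits_within:
  assumes "e < n"
  shows "\<exists>h<n. round_robin n (t + h) = e"
proof -
  have "(t + (e + n - t mod n) mod n) mod n = (t mod n + (e + n - t mod n)) mod n"
    by (simp add: mod_add_left_eq mod_add_right_eq)
  also have "t mod n + (e + n - t mod n) = e + n"
    using assms mod_less_divisor[of n t] by linarith
  finally show ?thesis using assms unfolding round_robin_def
    by (intro exI[of _ "(e + n - t mod n) mod n"]) simp
qed

lemma wait_time_round_robin_less: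
  assumes "e < n"
  shows "wait_time (round_robin n) t e < n"
proof -
  obtain h where "h < n" "round_robin n (t + h) = e"
    using round_robin_visits_within[OF assms] by blast
  then show ?thesis using wait_time_le[of "round_robin n" t h e] by simp
qed

lemma hit_round_robin:
  "e < n \<Longrightarrow> hit singletons e (round_robin n) t = of_nat (Suc (wait_time (round_robin n) t e))"
  using round_robin_visits_within[of e n t] by (auto simp: hit_singletons)

lemma wait_time_round_robin_periodic:
  "wait_time (round_robin n) (t + n) e = wait_time (round_robin n) t e"
proof -
  have "(t + n + h) mod n = (t + h) mod n" for h
    by (metis add.commute add.left_commute mod_add_self2)
  then show ?thesis unfolding wait_time_def round_robin_def by (simp only:)
qed

lemma bij_betw_wait_time_round_robin_elements:
  "bij_betw (wait_time (round_robin n) t) {..<n} {..<n}"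
  using round_robin_visits_within
  by (intro bij_betw_lessThan_self inj_on_wait_time wait_time_round_robin_less) blast+

lemma bij_betw_wait_time_round_robin_times:
  assumes "e < n"
  shows "bij_betw (\<lambda>t. wait_time (round_robin n) t e) {..<n} {..<n}"
proof (intro bij_betw_lessThan_self inj_onI wait_time_round_robin_less[OF assms])
  fix t t' assume "t \<in> {..<n}" "t' \<in> {..<n}"
    and eq: "wait_time (round_robin n) t e = wait_time (round_robin n) t' e"
  have "(t + wait_time (round_robin n) t e) mod n = (t' + wait_time (round_robin n) t' e) mod n"
    using wait_time_visits round_robin_visits_within[OF assms] by (metis round_robin_def)
  then have "t mod n = t' mod n" using eq by (simp add: nat_mod_eq_iff)
  then show "t = t'" using \<open>t \<in> {..<n}\<close> \<open>t' \<in> {..<n}\<close> by simp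
qed

lemma Mt_round_robin:
  assumes "e < n"
  shows "Mt (T_det singletons (round_robin n)) e = of_nat n"
proof (rule antisym)
  show "Mt (T_det singletons (round_robin n)) e \<le> of_nat n"
    unfolding Mt_def T_det_def using wait_time_round_robin_less[OF assms]
    by (intro SUP_least) (simp add: hit_round_robin[OF assms] Suc_le_eq del: of_nat_Suc)
  have "n - 1 \<in> (\<lambda>t. wait_time (round_robin n) t e) ` {..<n}"
    using bij_betw_imp_surj_on[OF bij_betw_wait_time_round_robin_times[OF assms]] assms by simp
  then obtain t where "t < n" "wait_time (round_robin n) t e = n - 1" by auto
  then show "of_nat n \<le> Mt (T_det singletons (round_robin n)) e"
    unfolding Mt_def T_det_def using assms
    by (intro SUP_upper2[of t]) (simp_all add: hit_round_robin del: of_nat_Suc)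
qed

lemma LIMSEQ_cesaro_T_det_round_robin:
  assumes "e < n"
  shows "cesaro (\<lambda>t. T_det singletons (round_robin n) e t) \<longlonglongrightarrow> ennreal ((real n + 1) / 2)"
proof -
  define g where "g t = real (Suc (wait_time (round_robin n) t e))" for t
  have eq: "T_det singletons (round_robin n) e = (\<lambda>t. ennreal (g t))"
    using assms
    by (simp add: fun_eq_iff T_det_def g_def hit_round_robin ennreal_of_nat_eq_real_of_nat
        del: of_nat_Suc)
  have avg: "(\<Sum>t<n. g t) / real n = (real n + 1) / 2"
    unfolding g_def using assms
    by (simp add: sum_bij_betw_lessThan_Suc[OF bij_betw_wait_time_round_robin_times]
        del: of_nat_Suc)
  have "cesaro (\<lambda>t. ennreal (g t)) \<longlonglongrightarrow> ennreal ((\<Sum>t<n. g t) / real n)"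
    using assms by (intro LIMSEQ_cesaro_periodic) (auto simp: g_def wait_time_round_robin_periodic)
  then show ?thesis unfolding eq avg .
qed

lemma Et_round_robin: "e < n \<Longrightarrow> Et (T_det singletons (round_robin n)) e = ennreal ((real n + 1) / 2)"
  unfolding Et_def using LIMSEQ_cesaro_T_det_round_robin by (rule limI)

lemma average_T_det_round_robin:
  "n \<ge> 1 \<Longrightarrow> (\<Sum>e<n. sum_w n e * T_det singletons (round_robin n) e t) = ennreal ((real n + 1) / 2)"
  by (simp add: T_det_def hit_round_robin ennreal_of_nat_eq_real_of_nat sum_sum_w_ennreal
      sum_bij_betw_lessThan_Suc[OF bij_betw_wait_time_round_robin_elements] del: of_nat_Suc)

lemma SUP_T_det_round_robin:
  assumes "n \<ge> 1"
  shows "(SUP e\<in>{..<n}. T_det singletons (round_robin n) e t) = of_nat n"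
proof (rule antisym)
  show "(SUP e\<in>{..<n}. T_det singletons (round_robin n) e t) \<le> of_nat n"
    using wait_time_round_robin_less
    by (intro SUP_least) (simp add: T_det_def hit_round_robin Suc_le_eq del: of_nat_Suc)
  show "of_nat n \<le> (SUP e\<in>{..<n}. T_det singletons (round_robin n) e t)"
    unfolding T_det_def by (rule hit_singletons_SUP_ge[OF assms])
qed

lemma convergent_cesaro_freq_round_robin:
  assumes "n \<ge> 1"
  shows "convergent (cesaro (\<lambda>t. freq_det (round_robin n) i t))"
proof -
  define g where "g t = (if t mod n = i then 1 else 0 :: real)" for t
  have "(\<lambda>t. freq_det (round_robin n) i t) = (\<lambda>t. ennreal (g t))"
    by (auto simp: freq_det_def g_def round_robin_def)
  moreover have "cesaro (\<lambda>t. ennreal (g t)) \<longlonglongrightarrow> ennreal ((\<Sum>t<n. g t) / real n)"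
    using assms by (intro LIMSEQ_cesaro_periodic) (auto simp: g_def)
  ultimately show ?thesis by (auto simp: convergent_def)
qed

lemma valid_det_round_robin: "n \<ge> 1 \<Longrightarrow> valid_det n n singletons (round_robin n)"
  using LIMSEQ_cesaro_T_det_round_robin
  by (auto simp: valid_det_def valid_def det_sched_def round_robin_def Mt_round_robin
      of_nat_less_top convergent_cesaro_freq_round_robin intro: convergentI)

lemma optD_WMP_singletons: "n \<ge> 1 \<Longrightarrow> optD_WMP n n singletons = of_nat n"
  unfolding optD_WMP_def
proof (rule INF_eq_minimum[of "round_robin n"])
  assume n: "n \<ge> 1"
  show "WMP n max_w (T_det singletons (round_robin n)) = of_nat n"
    using n by (simp add: WMP_def Mt_round_robin[unfolded Mt_def] lessThan_empty_iff)
  show "of_nat n \<le> WMP n max_w (T_det singletons \<sigma>)" for \<sigma>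
    using hit_singletons_SUP_ge[OF n] by (intro WMP_ge) (simp add: T_det_def)
qed (simp add: valid_det_round_robin)

lemma optD_EMP_singletons: "n \<ge> 1 \<Longrightarrow> optD_EMP n n singletons = of_nat n"
  unfolding optD_EMP_def
proof (rule INF_eq_minimum[of "round_robin n"])
  assume n: "n \<ge> 1"
  show "EMP n (sum_w n) (T_det singletons (round_robin n)) = of_nat n"
    using n by (simp add: EMP_def Mt_round_robin sum_sum_w_const)
  show "of_nat n \<le> EMP n (sum_w n) (T_det singletons \<sigma>)"
    if "\<sigma> \<in> {\<sigma>. valid_det n n singletons \<sigma>}" for \<sigma>
    using that by (intro EMP_singletons_ge n) (simp add: valid_det_def valid_def)
qed (simp add: valid_det_round_robin)

lemma optD_MWP_singletons: "n \<ge> 1 \<Longrightarrow> optD_MWP n n singletons = of_nat n"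
  unfolding optD_MWP_def
proof (rule INF_eq_minimum[of "round_robin n"])
  assume n: "n \<ge> 1"
  have "MWP_avg n max_w (T_det singletons (round_robin n)) = cesaro (\<lambda>_. of_nat n)"
    using n by (simp add: MWP_avg_def SUP_T_det_round_robin)
  then have "MWP_avg n max_w (T_det singletons (round_robin n)) \<longlonglongrightarrow> of_nat n"
    by (simp add: LIMSEQ_cesaro_const)
  then show "round_robin n \<in> {\<sigma>. valid_det n n singletons \<sigma> \<and>
      convergent (MWP_avg n max_w (T_det singletons \<sigma>))}"
    and "MWP n max_w (T_det singletons (round_robin n)) = of_nat n"
    using n by (auto simp: valid_det_round_robin MWP_def limI intro: convergentI)
  show "of_nat n \<le> MWP n max_w (T_det singletons \<sigma>)"
    if "\<sigma> \<in> {\<sigma>. valid_det n n singletons \<sigma> \<and>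
      convergent (MWP_avg n max_w (T_det singletons \<sigma>))}" for \<sigma>
    using that hit_singletons_SUP_ge[OF n] by (intro MWP_ge) (simp_all add: T_det_def)
qed

lemma optD_WEP_singletons: "n \<ge> 1 \<Longrightarrow> optD_WEP n n singletons = ennreal ((real n + 1) / 2)"
  unfolding optD_WEP_def
proof (rule INF_eq_minimum[of "round_robin n"])
  assume n: "n \<ge> 1"
  show "WEP n max_w (T_det singletons (round_robin n)) = ennreal ((real n + 1) / 2)"
    using n by (simp add: WEP_def Et_round_robin lessThan_empty_iff)
  show "ennreal ((real n + 1) / 2) \<le> WEP n max_w (T_det singletons \<sigma>)"
    if "\<sigma> \<in> {\<sigma>. valid_det n n singletons \<sigma>}" for \<sigma>
    using that hit_singletons_average_ge[OF n]
    by (intro EEP_WEP_ge(2) n) (auto simp: T_det_def valid_det_def valid_def)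
qed (simp add: valid_det_round_robin)

lemma optD_EEP_singletons: "n \<ge> 1 \<Longrightarrow> optD_EEP n n singletons = ennreal ((real n + 1) / 2)"
  unfolding optD_EEP_def
proof (rule INF_eq_minimum[of "round_robin n"])
  assume n: "n \<ge> 1"
  show "EEP n (sum_w n) (T_det singletons (round_robin n)) = ennreal ((real n + 1) / 2)"
    using n by (simp add: EEP_def Et_round_robin sum_sum_w_const)
  show "ennreal ((real n + 1) / 2) \<le> EEP n (sum_w n) (T_det singletons \<sigma>)"
    if "\<sigma> \<in> {\<sigma>. valid_det n n singletons \<sigma>}" for \<sigma>
    using that hit_singletons_average_ge[OF n]
    by (intro EEP_WEP_ge(1) n) (auto simp: T_det_def valid_det_def valid_def)
qed (simp add: valid_det_round_robin)

lemma optD_MEP_singletons: "n \<ge> 1 \<Longrightarrow> optD_MEP n n singletons = ennreal ((real n + 1) / 2)"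
  unfolding optD_MEP_def
proof (rule INF_eq_minimum[of "round_robin n"])
  assume n: "n \<ge> 1"
  show "MEP n (sum_w n) (T_det singletons (round_robin n)) = ennreal ((real n + 1) / 2)"
    using n by (simp add: MEP_def average_T_det_round_robin)
  show "ennreal ((real n + 1) / 2) \<le> MEP n (sum_w n) (T_det singletons \<sigma>)" for \<sigma>
    using hit_singletons_average_ge[OF n] by (intro MEP_ge) (simp add: T_det_def)
qed (simp add: valid_det_round_robin)

lemma opt_MAX_singletons: "n \<ge> 1 \<Longrightarrow> opt_MAX n n singletons = ennreal ((real n + 1) / 2)"
  unfolding opt_MAX_def
proof (rule INF_eq_minimum[of "return seq_space (round_robin n)"])
  assume n: "n \<ge> 1"
  show "WEP n max_w (T_st singletons (return seq_space (round_robin n)))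
      = ennreal ((real n + 1) / 2)"
    using n by (simp add: T_st_return WEP_def Et_round_robin lessThan_empty_iff)
  show "ennreal ((real n + 1) / 2) \<le> WEP n max_w (T_st singletons M)"
    if "M \<in> {M. valid_st n n singletons M}" for M
    using that T_st_singletons_average_ge[OF n]
    by (intro EEP_WEP_ge(2) n) (auto simp: valid_st_def valid_def)
qed (simp add: valid_st_return valid_det_round_robin)

lemma opt_SUM_singletons: "n \<ge> 1 \<Longrightarrow> opt_SUM n n singletons = ennreal ((real n + 1) / 2)"
  unfolding opt_SUM_def
proof (rule INF_eq_minimum[of "return seq_space (round_robin n)"])
  assume n: "n \<ge> 1"
  show "EEP n (sum_w n) (T_st singletons (return seq_space (round_robin n)))
      = ennreal ((real n + 1) / 2)"
    using n by (simp add: T_st_return EEP_def Et_round_robin sum_sum_w_const)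
  show "ennreal ((real n + 1) / 2) \<le> EEP n (sum_w n) (T_st singletons M)"
    if "M \<in> {M. valid_st n n singletons M}" for M
    using that T_st_singletons_average_ge[OF n]
    by (intro EEP_WEP_ge(1) n) (auto simp: valid_st_def valid_def)
qed (simp add: valid_st_return valid_det_round_robin)

lemma ennreal_two_minus_mult_half_Suc_le:
  assumes "\<epsilon> > 0" "2 / \<epsilon> \<le> real n"
  shows "ennreal (2 - \<epsilon>) * ennreal ((real n + 1) / 2) \<le> of_nat n"
proof (cases "\<epsilon> \<le> 2")
  case True
  have "(2 - \<epsilon>) * ((real n + 1) / 2) \<le> real n"
    using assms by (simp add: field_simps)
  then show ?thesis
    using True by (simp add: ennreal_mult'[symmetric] ennreal_of_nat_eq_real_of_nat ennreal_leI)
qed (simp add: ennreal_neg)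

theorem lemma7:
  fixes \<epsilon> :: real
  assumes "\<epsilon> > 0"
  shows "\<exists>n m s A B. is_instance n m s
     \<and> optM_MAX n m s = A \<and> optM_SUM n m s = A \<and> optD_WMP n m s = A
     \<and> optD_EMP n m s = A \<and> optD_MWP n m s = A
     \<and> optD_WEP n m s = B \<and> optD_EEP n m s = B \<and> optD_MEP n m s = B
     \<and> opt_MAX n m s = B \<and> opt_SUM n m s = B
     \<and> A \<ge> ennreal (2 - \<epsilon>) * B"
proof -
  define n where "n = nat \<lceil>2 / \<epsilon>\<rceil> + 1"
  have "n \<ge> 1" "2 / \<epsilon> \<le> real n"
    unfolding n_def by linarith+
  then show ?thesis
    using assms
    by (intro exI[of _ n] exI[of _ n] exI[of _ singletons] exI[of _ "of_nat n"]
        exI[of _ "ennreal ((real n + 1) / 2)"])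
      (simp add: is_instance_singletons optM_MAX_singletons optM_SUM_singletons
        optD_WMP_singletons optD_EMP_singletons optD_MWP_singletons optD_WEP_singletons
        optD_EEP_singletons optD_MEP_singletons opt_MAX_singletons opt_SUM_singletons
        ennreal_two_minus_mult_half_Suc_le)
qed

end
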